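(* Let $\Omega\in\mathcal{A}(r,L,R)$, let $e_1,\dots,e_M$ be electrodes with extended electrodes $\tilde e_1,\dots,\tilde e_M$. Then $E\circ P$, regarded as a bounded operator on $L^2_\ast(\partial\Omega)$, is the adjoint of $Q$, regarded as a bounded operator on $L^2_\ast(\partial\Omega)$; i.e. $\int_{\partial\Omega}(E\circ P)[f]\,g=\int_{\partial\Omega}f\,Q[g]$ for all $f,g\in L^2_\ast(\partial\Omega)$. In particular, $$\|\mathbbm{1}-E\circ P\|_{\mathcal{L}(H^{1/2}_\ast(\partial\Omega),L^2_\ast(\partial\Omega))}=\|\mathbbm{1}-Q\|_{\mathcal{L}(L^2_\ast(\partial\Omega),H^{-1/2}_\ast(\partial\Omega))}.$$
   Context: $N\ge2$; $\Omega\in\mathcal{A}(r,L,R)$ means: $\Omega\subset B_R(0)$ is a bounded domain such that for every $x\in\partial\Omega$, after a rigid change of coordinates, $\Omega\cap B_r(x)=\{y\in B_r(x):y_N<\varphi(y')\}$ with $\varphi$ Lipschitz of constant at most $L$. $L^2_\ast(\partial\Omega)$: $L^2(\partial\Omega)$ functions with zero mean. $H^1_\ast(\Omega)$: $u\in H^1(\Omega)$ with zero-mean trace. $H^{1/2}_\ast(\partial\Omega)$: traces of $H^1_\ast(\Omega)$ functions, with norm $\|\varphi\|=\inf\{\|\nabla u\|_{L^2(\Omega)}:u\in H^1_\ast(\Omega),\,u|_{\partial\Omega}=\varphi\}$. $H^{-1/2}_\ast(\partial\Omega)$: bounded linear functionals on $H^{1/2}(\partial\Omega)$ (trace space of $H^1(\Omega)$)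 vanishing on constants, normed by the dual norm of $H^{1/2}_\ast(\partial\Omega)$; $L^2_\ast(\partial\Omega)$ is embedded in it via $g\mapsto(\varphi\mapsto\int_{\partial\Omega}g\varphi)$. Electrodes: $e_1,\dots,e_M$ nonempty open pairwise disjoint subsets of $\partial\Omega$; $|e_m|=\mathcal{H}^{N-1}(e_m)$, $e=\bigcup_m e_m$. Extended electrodes: open sets $\tilde e_m\subset\partial\Omega$ with $e_m\subset\tilde e_m$, pairwise disjoint, and $\mathcal{H}^{N-1}(\partial\Omega\setminus\bigcup_m\tilde e_m)=0$. $PC=\{\sum_m \frac{I_m}{|e_m|}\chi_{e_m}: I\in\mathbb{R}^M\}$ with the $L^2(\partial\Omega)$ norm, $PC_\ast=PC\cap L^2_\ast(\partial\Omega)$; $\Phi:\mathbb{R}^M\to PC$, $\Phi(I)=\sum_m\frac{I_m}{|e_m|}\chi_{e_m}$. Operators: $Q(f)=\sum_m\frac{1}{|e_m|}\left(\int_{\tilde e_m}f\right)\chi_{e_m}$ for $f\in L^2(\partial\Omega)$; $P_e[f]=\sum_m(\fint_{e_m}f)\chi_{e_m}$; $P_{e\ast}[f]=f-(\fint_e f)\chi_e$ for $f\in PC$; $P=P_{e\ast}\circ P_e$; $P_\ast[f]=f-\fint_{\partial\Omega}f$; and for $\tilde V\in PC$ with $V=\Phi^{-1}(\tilde V)$, $E(\tilde V)=P_\ast\left[\sum_m\frac{V_m}{|e_m|}\chi_{\tilde e_m}\right]$. $\mathbbm{1}$ denotes the identity/inclusion. *)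

theory Defs
  imports "HOL-Analysis.Analysis"
begin

definition hausdorff_const :: "real \<Rightarrow> real" where
  "hausdorff_const s = pi powr (s / 2) / Gamma (s / 2 + 1) / 2 powr s"

definition hausdorff_outer :: "real \<Rightarrow> 'a::euclidean_space set \<Rightarrow> ennreal" where
  "hausdorff_outer s A =
     (SUP \<delta>\<in>{0<..}. INF C\<in>{C :: nat \<Rightarrow> 'a set. A \<subseteq> (\<Union>i. C i) \<and>
                                (\<forall>i. bounded (C i) \<and> diameter (C i) \<le> \<delta>)}.
        (\<Sum>i. ennreal (hausdorff_const s * diameter (C i) powr s)))"

definition hausdorff_measure :: "real \<Rightarrow> 'a::euclidean_space measure" where
  "hausdorff_measure s = measure_of UNIV (sets borel) (hausdorff_outer s)"

definition bdry_measure :: "'a::euclidean_space set \<Rightarrow> 'a measure" where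
  "bdry_measure \<Omega> = restrict_space (hausdorff_measure (real DIM('a) - 1)) (frontier \<Omega>)"

definition lip_domain_class :: "real \<Rightarrow> real \<Rightarrow> real \<Rightarrow> 'a::euclidean_space set \<Rightarrow> bool" where
  "lip_domain_class r L R \<Omega> \<longleftrightarrow>
     open \<Omega> \<and> connected \<Omega> \<and> \<Omega> \<noteq> {} \<and> \<Omega> \<subseteq> ball 0 R \<and>
     (\<forall>x\<in>frontier \<Omega>. \<exists>(T :: 'a \<Rightarrow> 'a) (b :: 'a) (\<phi> :: 'a \<Rightarrow> real).
        (\<forall>y z. dist (T y) (T z) = dist y z) \<and> surj T \<and> b \<in> Basis \<and>
        L-lipschitz_on {z. z \<bullet> b = 0} \<phi> \<and>
        \<Omega> \<inter> ball x r = {y \<in> ball x r. T y \<bullet> b < \<phi> (T y - (T y \<bullet> b) *\<^sub>R b)})"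

text \<open>\<open>f\<close> is \<open>C^\<infinity>\<close> on the whole space, \<open>D ds\<close> being the iterated partial
  derivative along the list of basis directions \<open>ds\<close>.\<close>
definition smooth_with :: "('a::euclidean_space \<Rightarrow> real) \<Rightarrow> ('a list \<Rightarrow> 'a \<Rightarrow> real) \<Rightarrow> bool" where
  "smooth_with f D \<longleftrightarrow> D [] = f \<and>
     (\<forall>ds x. (D ds has_derivative (\<lambda>h. \<Sum>b\<in>Basis. (h \<bullet> b) * D (b # ds) x)) (at x))"

definition grad_of :: "('a::euclidean_space list \<Rightarrow> 'a \<Rightarrow> real) \<Rightarrow> 'a \<Rightarrow> 'a" where
  "grad_of D x = (\<Sum>b\<in>Basis. D [b] x *\<^sub>R b)"

definition test_fun :: "'a::euclidean_space set \<Rightarrow> ('a \<Rightarrow> real) \<Rightarrow> ('a list \<Rightarrow> 'a \<Rightarrow> real) \<Rightarrow> bool" where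
  "test_fun \<Omega> \<psi> D \<longleftrightarrow> smooth_with \<psi> D \<and>
     compact (closure {x. \<psi> x \<noteq> 0}) \<and> closure {x. \<psi> x \<noteq> 0} \<subseteq> \<Omega>"

definition weak_gradient :: "'a::euclidean_space set \<Rightarrow> ('a \<Rightarrow> real) \<Rightarrow> ('a \<Rightarrow> 'a) \<Rightarrow> bool" where
  "weak_gradient \<Omega> u G \<longleftrightarrow>
     (\<forall>\<psi> D. test_fun \<Omega> \<psi> D \<longrightarrow> (\<forall>i\<in>Basis.
        integral\<^sup>L (lebesgue_on \<Omega>) (\<lambda>x. u x * D [i] x) =
        - integral\<^sup>L (lebesgue_on \<Omega>) (\<lambda>x. (G x \<bullet> i) * \<psi> x)))"

definition H1 :: "'a::euclidean_space set \<Rightarrow> ('a \<Rightarrow> real) \<Rightarrow> ('a \<Rightarrow> 'a) \<Rightarrow> bool" where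
  "H1 \<Omega> u G \<longleftrightarrow>
     u \<in> borel_measurable (lebesgue_on \<Omega>) \<and> integrable (lebesgue_on \<Omega>) (\<lambda>x. (u x)\<^sup>2) \<and>
     G \<in> borel_measurable (lebesgue_on \<Omega>) \<and> integrable (lebesgue_on \<Omega>) (\<lambda>x. (norm (G x))\<^sup>2) \<and>
     weak_gradient \<Omega> u G"

definition L2 :: "'a measure \<Rightarrow> ('a \<Rightarrow> real) \<Rightarrow> bool" where
  "L2 M f \<longleftrightarrow> f \<in> borel_measurable M \<and> integrable M (\<lambda>x. (f x)\<^sup>2)"

definition L2star :: "'a measure \<Rightarrow> ('a \<Rightarrow> real) \<Rightarrow> bool" where
  "L2star M f \<longleftrightarrow> L2 M f \<and> integral\<^sup>L M f = 0"

definition L2norm :: "'a measure \<Rightarrow> ('a \<Rightarrow> real) \<Rightarrow> real" where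
  "L2norm M f = sqrt (integral\<^sup>L M (\<lambda>x. (f x)\<^sup>2))"

definition trace_of :: "'a::euclidean_space set \<Rightarrow> ('a \<Rightarrow> real) \<Rightarrow> ('a \<Rightarrow> real) \<Rightarrow> bool" where
  "trace_of \<Omega> u \<phi> \<longleftrightarrow> L2 (bdry_measure \<Omega>) \<phi> \<and>
     (\<exists>G us Ds. H1 \<Omega> u G \<and> (\<forall>k. smooth_with (us k) (Ds k)) \<and>
        (\<lambda>k. integral\<^sup>L (lebesgue_on \<Omega>) (\<lambda>x. (us k x - u x)\<^sup>2) +
             integral\<^sup>L (lebesgue_on \<Omega>) (\<lambda>x. (norm (grad_of (Ds k) x - G x))\<^sup>2))
          \<longlonglongrightarrow> 0 \<and>
        (\<lambda>k. integral\<^sup>L (bdry_measure \<Omega>) (\<lambda>x. (us k x - \<phi> x)\<^sup>2)) \<longlonglongrightarrow> 0)"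

definition H12star :: "'a::euclidean_space set \<Rightarrow> ('a \<Rightarrow> real) \<Rightarrow> bool" where
  "H12star \<Omega> \<phi> \<longleftrightarrow> (\<exists>u. trace_of \<Omega> u \<phi>) \<and> integral\<^sup>L (bdry_measure \<Omega>) \<phi> = 0"

definition H12norm :: "'a::euclidean_space set \<Rightarrow> ('a \<Rightarrow> real) \<Rightarrow> real" where
  "H12norm \<Omega> \<phi> = Inf {sqrt (integral\<^sup>L (lebesgue_on \<Omega>) (\<lambda>x. (norm (G x))\<^sup>2)) | u G.
       H1 \<Omega> u G \<and> trace_of \<Omega> u \<phi> \<and> integral\<^sup>L (bdry_measure \<Omega>) \<phi> = 0}"

text \<open>Norm in \<open>H^{-1/2}_*(\<partial>\<Omega>)\<close> of the functional induced by \<open>h \<in> L^2_*(\<partial>\<Omega>)\<close>.\<close>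
definition Hm12norm :: "'a::euclidean_space set \<Rightarrow> ('a \<Rightarrow> real) \<Rightarrow> ereal" where
  "Hm12norm \<Omega> h = (SUP \<phi>\<in>{\<phi>. H12star \<Omega> \<phi> \<and> H12norm \<Omega> \<phi> \<le> 1}.
       ereal \<bar>integral\<^sup>L (bdry_measure \<Omega>) (\<lambda>x. h x * \<phi> x)\<bar>)"

definition electrodes :: "'a::euclidean_space set \<Rightarrow> ('m \<Rightarrow> 'a set) \<Rightarrow> bool" where
  "electrodes \<Omega> e \<longleftrightarrow>
     (\<forall>m. openin (top_of_set (frontier \<Omega>)) (e m) \<and> e m \<noteq> {}) \<and>
     (\<forall>m m'. m \<noteq> m' \<longrightarrow> e m \<inter> e m' = {})"

definition extended_electrodes ::
    "'a::euclidean_space set \<Rightarrow> ('m \<Rightarrow> 'a set) \<Rightarrow> ('m \<Rightarrow> 'a set) \<Rightarrow> bool" where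
  "extended_electrodes \<Omega> e et \<longleftrightarrow>
     (\<forall>m. openin (top_of_set (frontier \<Omega>)) (et m) \<and> e m \<subseteq> et m) \<and>
     (\<forall>m m'. m \<noteq> m' \<longrightarrow> et m \<inter> et m' = {}) \<and>
     emeasure (hausdorff_measure (real DIM('a) - 1)) (frontier \<Omega> - (\<Union>m. et m)) = 0"

definition Qop :: "'a measure \<Rightarrow> ('m::finite \<Rightarrow> 'a set) \<Rightarrow> ('m \<Rightarrow> 'a set) \<Rightarrow> ('a \<Rightarrow> real) \<Rightarrow> 'a \<Rightarrow> real" where
  "Qop M e et f = (\<lambda>x. \<Sum>m\<in>UNIV. (1 / measure M (e m)) * (LINT y:et m|M. f y) * indicator (e m) x)"

definition Pe_op :: "'a measure \<Rightarrow> ('m::finite \<Rightarrow> 'a set) \<Rightarrow> ('a \<Rightarrow> real) \<Rightarrow> 'a \<Rightarrow> real" where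
  "Pe_op M e f = (\<lambda>x. \<Sum>m\<in>UNIV. ((LINT y:e m|M. f y) / measure M (e m)) * indicator (e m) x)"

definition Pestar_op :: "'a measure \<Rightarrow> ('m::finite \<Rightarrow> 'a set) \<Rightarrow> ('a \<Rightarrow> real) \<Rightarrow> 'a \<Rightarrow> real" where
  "Pestar_op M e f = (\<lambda>x. f x - ((LINT y:(\<Union>m. e m)|M. f y) / measure M (\<Union>m. e m)) * indicator (\<Union>m. e m) x)"

definition P_op :: "'a measure \<Rightarrow> ('m::finite \<Rightarrow> 'a set) \<Rightarrow> ('a \<Rightarrow> real) \<Rightarrow> 'a \<Rightarrow> real" where
  "P_op M e = Pestar_op M e \<circ> Pe_op M e"

definition Pstar_op :: "'a measure \<Rightarrow> ('a \<Rightarrow> real) \<Rightarrow> 'a \<Rightarrow> real" where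
  "Pstar_op M f = (\<lambda>x. f x - integral\<^sup>L M f / measure M (space M))"

definition Phi_op :: "'a measure \<Rightarrow> ('m::finite \<Rightarrow> 'a set) \<Rightarrow> ('m \<Rightarrow> real) \<Rightarrow> 'a \<Rightarrow> real" where
  "Phi_op M e I = (\<lambda>x. \<Sum>m\<in>UNIV. (I m / measure M (e m)) * indicator (e m) x)"

definition E_op :: "'a measure \<Rightarrow> ('m::finite \<Rightarrow> 'a set) \<Rightarrow> ('m \<Rightarrow> 'a set) \<Rightarrow> ('a \<Rightarrow> real) \<Rightarrow> 'a \<Rightarrow> real" where
  "E_op M e et Vt = (let V = (THE V. Phi_op M e V = Vt) in
     Pstar_op M (\<lambda>x. \<Sum>m\<in>UNIV. (V m / measure M (e m)) * indicator (et m) x))"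

end

theory Submission
  imports Defs
begin

text \<open>Write \<open>a\<^sub>m = \<integral>\<^bsub>e\<^sub>m\<^esub> f\<close> and \<open>b\<^sub>m = \<integral>\<^bsub>et\<^sub>m\<^esub> g\<close>.
  Both \<open>\<integral> (E \<circ> P) f \<cdot> g\<close> and \<open>\<integral> f \<cdot> Q g\<close> equal \<open>\<Sum>\<^sub>m a\<^sub>m b\<^sub>m / |e\<^sub>m|\<close>:
  the constants subtracted by \<open>P\<^sub>e\<^sub>*\<close> and \<open>P\<^sub>*\<close> integrate to zero against \<open>g\<close>, since
  \<open>g\<close> has mean zero and the extended electrodes cover the boundary up to a null set.
  The norm identity follows by writing the \<open>L\<^sup>2\<close> norm of a mean-zero function \<open>u\<close> as the
  supremum of \<open>|\<integral> g u|\<close> over the unit ball of \<open>L\<^sup>2\<^sub>*\<close> and exchanging the two suprema.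

  Measure theory only enters to show that the boundary measure is finite and charges every
  nonempty relatively open subset of the boundary. Near each boundary point the boundary is a
  Lipschitz graph over a hyperplane, so its \<open>(N - 1)\<close>-dimensional Hausdorff outer measure is
  bounded above by covers with grid cells and below by comparing Lebesgue measures of slabs.
  If the Hausdorff outer measure were not countably additive on Borel sets, \<open>measure_of\<close>
  would return the zero measure, and both identities would hold trivially.\<close>

section \<open>Square-integrable functions\<close>

lemma L2_mult_integrable:
  fixes f g :: "'a \<Rightarrow> real"
  assumes "L2 M f" "L2 M g"
  shows "integrable M (\<lambda>x. f x * g x)"
proof (rule Bochner_Integration.integrable_bound[of M "\<lambda>x. ((f x)\<^sup>2 + (g x)\<^sup>2) / 2"])
  show "integrable M (\<lambda>x. ((f x)\<^sup>2 + (g x)\<^sup>2) / 2)" "(\<lambda>x. f x * g x) \<in> borel_measurable M"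
    using assms unfolding L2_def by auto
  have "norm (f x * g x) \<le> norm (((f x)\<^sup>2 + (g x)\<^sup>2) / 2)" for x
    using sum_squares_bound[of "\<bar>f x\<bar>" "\<bar>g x\<bar>"] by (simp add: abs_mult)
  then show "AE x in M. norm (f x * g x) \<le> norm (((f x)\<^sup>2 + (g x)\<^sup>2) / 2)"
    by (intro AE_I2)
qed

lemma L2_integrable:
  fixes f :: "'a \<Rightarrow> real"
  assumes "finite_measure M" "L2 M f"
  shows "integrable M f"
  using assms(2) finite_measure.square_integrable_imp_integrable[OF assms(1), of f]
  unfolding L2_def by blast

lemma L2_bounded:
  fixes f :: "'a \<Rightarrow> real"
  assumes fin: "finite_measure M" and f: "f \<in> borel_measurable M" and bound: "\<And>x. \<bar>f x\<bar> \<le> B"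
  shows "L2 M f"
  unfolding L2_def
proof
  have "norm ((f x)\<^sup>2) \<le> B\<^sup>2" for x
    using power_mono[of "\<bar>f x\<bar>" B 2] bound[of x] by simp
  then show "integrable M (\<lambda>x. (f x)\<^sup>2)"
    using f by (intro finite_measure.integrable_const_bound[OF fin] AE_I2 borel_measurable_power)
qed (fact f)

lemma L2_diff:
  fixes f g :: "'a \<Rightarrow> real"
  assumes "L2 M f" "L2 M g"
  shows "L2 M (\<lambda>x. f x - g x)"
  unfolding L2_def
proof
  have f: "f \<in> borel_measurable M" "integrable M (\<lambda>x. (f x)\<^sup>2)"
    and g: "g \<in> borel_measurable M" "integrable M (\<lambda>x. (g x)\<^sup>2)"
    using assms unfolding L2_def by auto
  show diff: "(\<lambda>x. f x - g x) \<in> borel_measurable M"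
    using f(1) g(1) by (rule borel_measurable_diff)
  show "integrable M (\<lambda>x. (f x - g x)\<^sup>2)"
  proof (rule Bochner_Integration.integrable_bound)
    show "integrable M (\<lambda>x. 2 * (f x)\<^sup>2 + 2 * (g x)\<^sup>2)"
      using f(2) g(2) by simp
    show "(\<lambda>x. (f x - g x)\<^sup>2) \<in> borel_measurable M"
      using diff by (rule borel_measurable_power)
    have "(f x - g x)\<^sup>2 \<le> 2 * (f x)\<^sup>2 + 2 * (g x)\<^sup>2" for x
      using zero_le_power2[of "f x + g x"] by (simp add: power2_eq_square algebra_simps)
    then show "AE x in M. norm ((f x - g x)\<^sup>2) \<le> norm (2 * (f x)\<^sup>2 + 2 * (g x)\<^sup>2)"
      by (intro AE_I2) simp
  qed
qed

lemma L2_cmult: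
  fixes f :: "'a \<Rightarrow> real"
  assumes "L2 M f"
  shows "L2 M (\<lambda>x. c * f x)"
  using assms unfolding L2_def by (simp add: power_mult_distrib borel_measurable_times)

lemma L2star_zero: "L2star M (\<lambda>x. 0::real)"
  unfolding L2star_def L2_def by simp

lemma L2star_diff:
  fixes f g :: "'a \<Rightarrow> real"
  assumes "finite_measure M" "L2star M f" "L2star M g"
  shows "L2star M (\<lambda>x. f x - g x)"
proof -
  have "integrable M f" "integrable M g"
    using assms L2_integrable unfolding L2star_def by blast+
  then show ?thesis
    using assms L2_diff[of M f g] unfolding L2star_def by simp
qed

lemma L2norm_nonneg: "0 \<le> L2norm M f"
  and L2norm_squared: "(L2norm M f)\<^sup>2 = integral\<^sup>L M (\<lambda>x. (f x)\<^sup>2)"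
proof -
  have "0 \<le> integral\<^sup>L M (\<lambda>x. (f x)\<^sup>2)"
    by (rule integral_nonneg_AE) simp
  then show "0 \<le> L2norm M f" "(L2norm M f)\<^sup>2 = integral\<^sup>L M (\<lambda>x. (f x)\<^sup>2)"
    unfolding L2norm_def by simp_all
qed

lemma abs_integral_mult_le_L2norm:
  fixes g u :: "'a \<Rightarrow> real"
  assumes g: "L2 M g" "L2norm M g \<le> 1" and u: "L2 M u"
  shows "\<bar>integral\<^sup>L M (\<lambda>x. g x * u x)\<bar> \<le> L2norm M u"
proof (cases "L2norm M u = 0")
  case True
  then have "integral\<^sup>L M (\<lambda>x. (u x)\<^sup>2) = 0"
    using L2norm_squared[of M u] by simp
  then have "AE x in M. (u x)\<^sup>2 = 0"
    using integral_nonneg_eq_0_iff_AE[of M "\<lambda>x. (u x)\<^sup>2"] u unfolding L2_def by auto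
  then have "AE x in M. g x * u x = 0"
    by eventually_elim simp
  then show ?thesis
    using True by (simp add: integral_eq_zero_AE)
next
  case False
  define n where "n = L2norm M u"
  have n: "0 < n"
    using False L2norm_nonneg[of M u] unfolding n_def by linarith
  have Ig: "integral\<^sup>L M (\<lambda>x. (g x)\<^sup>2) \<le> 1"
    using L2norm_squared[of M g] g(2) power_mono[of "L2norm M g" 1 2] by (simp add: L2norm_def)
  \<comment> \<open>AM-GM with weight \<open>n\<close>; it is sharp for \<open>g = u / n\<close>.\<close>
  have pointwise: "\<bar>g x * u x\<bar> \<le> (n * (g x)\<^sup>2 + (u x)\<^sup>2 / n) / 2" for x
  proof -
    have "0 \<le> (n * \<bar>g x\<bar> - \<bar>u x\<bar>)\<^sup>2 / n"
      using n by simp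
    also have "\<dots> = n * (g x)\<^sup>2 + (u x)\<^sup>2 / n - 2 * \<bar>g x * u x\<bar>"
      using n by (simp add: power2_eq_square field_simps abs_mult)
    finally show ?thesis by simp
  qed
  have "\<bar>integral\<^sup>L M (\<lambda>x. g x * u x)\<bar> \<le> integral\<^sup>L M (\<lambda>x. \<bar>g x * u x\<bar>)"
    by (rule integral_abs_bound)
  also have "\<dots> \<le> integral\<^sup>L M (\<lambda>x. (n * (g x)\<^sup>2 + (u x)\<^sup>2 / n) / 2)"
    using g(1) u L2_mult_integrable[OF g(1) u] unfolding L2_def by (intro integral_mono pointwise) auto
  also have "\<dots> = (n * integral\<^sup>L M (\<lambda>x. (g x)\<^sup>2) + integral\<^sup>L M (\<lambda>x. (u x)\<^sup>2) / n) / 2"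
    using g(1) u unfolding L2_def by simp
  also have "\<dots> \<le> (n * 1 + n\<^sup>2 / n) / 2"
    using Ig n L2norm_squared[of M u] unfolding n_def
    by (intro divide_right_mono add_mono mult_left_mono) auto
  also have "\<dots> = L2norm M u"
    using n unfolding n_def by (simp add: power2_eq_square)
  finally show ?thesis .
qed

lemma L2norm_dual:
  fixes u :: "'a \<Rightarrow> real"
  assumes u: "L2star M u"
  shows "(SUP g\<in>{g. L2star M g \<and> L2norm M g \<le> 1}. ereal \<bar>integral\<^sup>L M (\<lambda>x. g x * u x)\<bar>)
    = ereal (L2norm M u)" (is "?S = _")
proof (rule antisym)
  show "?S \<le> ereal (L2norm M u)"
    using abs_integral_mult_le_L2norm u unfolding L2star_def by (intro SUP_least) auto
  have "\<exists>g\<in>{g. L2star M g \<and> L2norm M g \<le> 1}. \<bar>integral\<^sup>L M (\<lambda>x. g x * u x)\<bar> = L2norm M u"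
  proof (cases "L2norm M u = 0")
    case True
    then show ?thesis
      using L2star_zero by (intro bexI[of _ "\<lambda>x. 0"]) (auto simp: L2norm_def)
  next
    case False
    define n where "n = L2norm M u"
    have n: "0 < n"
      using False L2norm_nonneg[of M u] unfolding n_def by linarith
    have nsq: "n\<^sup>2 = integral\<^sup>L M (\<lambda>x. (u x)\<^sup>2)"
      unfolding n_def by (rule L2norm_squared)
    let ?g = "\<lambda>x. (1 / n) * u x"
    have "L2star M ?g"
      using u L2_cmult[of M u "1 / n"] unfolding L2star_def by simp
    moreover have "L2norm M ?g = 1"
    proof -
      have "integral\<^sup>L M (\<lambda>x. (?g x)\<^sup>2) = integral\<^sup>L M (\<lambda>x. (u x)\<^sup>2) / n\<^sup>2"
        by (simp add: power_mult_distrib power_divide)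
      also have "\<dots> = 1"
        unfolding nsq[symmetric] using n by simp
      finally show ?thesis
        unfolding L2norm_def by simp
    qed
    moreover have "integral\<^sup>L M (\<lambda>x. ?g x * u x) = n"
    proof -
      have "integral\<^sup>L M (\<lambda>x. ?g x * u x) = integral\<^sup>L M (\<lambda>x. (u x)\<^sup>2) / n"
        by (simp add: power2_eq_square)
      also have "\<dots> = n"
        unfolding nsq[symmetric] using n by (simp add: power2_eq_square)
      finally show ?thesis .
    qed
    ultimately show ?thesis
      using n unfolding n_def[symmetric] by (intro bexI[of _ ?g]) auto
  qed
  then show "ereal (L2norm M u) \<le> ?S"
    by (metis (no_types, lifting) SUP_upper)
qed

section \<open>The electrode operators\<close>

locale electrode_system = finite_measure M
  for M :: "'a measure" and e et :: "'m::finite \<Rightarrow> 'a set" +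
  assumes sets_e: "e m \<in> sets M"
    and sets_et: "et m \<in> sets M"
    and disjoint_e: "m \<noteq> m' \<Longrightarrow> e m \<inter> e m' = {}"
    and disjoint_et: "m \<noteq> m' \<Longrightarrow> et m \<inter> et m' = {}"
    and measure_e_pos: "0 < measure M (e m)"
    and AE_in_et: "AE x in M. x \<in> (\<Union>m. et m)"
begin

definition P_coeff :: "('a \<Rightarrow> real) \<Rightarrow> 'm \<Rightarrow> real" where
  "P_coeff f m = (LINT y:e m|M. f y) / measure M (e m)
     - (\<Sum>m'\<in>UNIV. LINT y:e m'|M. f y) / measure M (\<Union>m'. e m')"

lemma measure_space_nonzero: "measure M (space M) \<noteq> 0"
  using bounded_measure[of "e undefined"] measure_e_pos[of undefined] by linarith

lemma sum_indicator_e_eq: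
  assumes "x \<in> e m"
  shows "(\<Sum>m'\<in>UNIV. k m' * indicator (e m') x) = (k m :: real)"
proof -
  have "k m' * indicator (e m') x = (if m' = m then k m else 0)" for m'
    using disjoint_e[of m' m] assms by (auto simp: indicator_def)
  then show ?thesis by simp
qed

lemma integrable_step:
  assumes "\<And>m. A m \<in> sets M"
  shows "integrable M (\<lambda>x. \<Sum>m\<in>UNIV. (c m :: real) * indicator (A m) x)"
  using assms by (intro Bochner_Integration.integrable_sum integrable_mult_right)
    (auto simp: emeasure_finite less_top[symmetric])

lemma integral_step_mult:
  assumes "\<And>m. A m \<in> sets M" "integrable M g"
  shows "integral\<^sup>L M (\<lambda>x. (\<Sum>m\<in>UNIV. (c m :: real) * indicator (A m) x) * g x)
    = (\<Sum>m\<in>UNIV. c m * (LINT y:A m|M. g y))"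
proof -
  have "integrable M (\<lambda>x. c m * (indicator (A m) x * g x))" for m
    using assms integrable_mult_indicator[of _ M g] by simp
  then have "integral\<^sup>L M (\<lambda>x. \<Sum>m\<in>UNIV. c m * (indicator (A m) x * g x))
      = (\<Sum>m\<in>UNIV. c m * integral\<^sup>L M (\<lambda>x. indicator (A m) x * g x))"
    by (subst Bochner_Integration.integral_sum) auto
  then show ?thesis
    by (simp add: sum_distrib_right mult.assoc set_lebesgue_integral_def)
qed

lemma L2_step_minus_const:
  assumes "\<And>m. A m \<in> sets M"
  shows "L2 M (\<lambda>x. (\<Sum>m\<in>UNIV. (c m :: real) * indicator (A m) x) - k)"
proof (rule L2_bounded[OF finite_measure_axioms, where B = "(\<Sum>m\<in>UNIV. \<bar>c m\<bar>) + \<bar>k\<bar>"])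
  show "(\<lambda>x. (\<Sum>m\<in>UNIV. c m * indicator (A m) x) - k) \<in> borel_measurable M"
    using borel_measurable_integrable[OF integrable_step[OF assms, of c]] by simp
  fix x
  have "\<bar>\<Sum>m\<in>UNIV. c m * indicator (A m) x\<bar> \<le> (\<Sum>m\<in>UNIV. \<bar>c m * indicator (A m) x\<bar>)"
    by (rule sum_abs)
  also have "\<dots> \<le> (\<Sum>m\<in>UNIV. \<bar>c m\<bar>)"
    by (intro sum_mono) (auto simp: abs_mult indicator_def)
  finally show "\<bar>(\<Sum>m\<in>UNIV. c m * indicator (A m) x) - k\<bar> \<le> (\<Sum>m\<in>UNIV. \<bar>c m\<bar>) + \<bar>k\<bar>"
    by linarith
qed

lemma P_op_eq: "P_op M e f = (\<lambda>x. \<Sum>m\<in>UNIV. P_coeff f m * indicator (e m) x)"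
proof -
  define a where "a m = (LINT y:e m|M. f y)" for m
  have Pe: "Pe_op M e f = (\<lambda>x. \<Sum>m\<in>UNIV. (a m / measure M (e m)) * indicator (e m) x)"
    unfolding Pe_op_def a_def by simp
  have "(LINT y:(\<Union>m. e m)|M. Pe_op M e f y)
      = integral\<^sup>L M (\<lambda>x. (\<Sum>m\<in>UNIV. (a m / measure M (e m)) * indicator (e m) x) * 1)"
    unfolding set_lebesgue_integral_def Pe
    by (rule Bochner_Integration.integral_cong) (auto simp: indicator_def sum_distrib_left)
  also have "\<dots> = (\<Sum>m\<in>UNIV. (a m / measure M (e m)) * (LINT y:e m|M. 1))"
    by (rule integral_step_mult) (auto simp: sets_e)
  also have "\<dots> = (\<Sum>m\<in>UNIV. a m)"
    using measure_e_pos
    by (intro sum.cong refl) (simp add: set_lebesgue_integral_def sets_e less_imp_neq[symmetric])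
  finally have mean: "(LINT y:(\<Union>m. e m)|M. Pe_op M e f y) = (\<Sum>m\<in>UNIV. a m)" .
  have "indicator (\<Union>m. e m) x = (\<Sum>m\<in>UNIV. indicator (e m) x :: real)" for x
    using indicator_UN_disjoint[of UNIV e x] disjoint_e by (simp add: disjoint_family_on_def)
  then show ?thesis
    unfolding P_op_def Pestar_op_def comp_def mean
    by (simp add: Pe P_coeff_def a_def left_diff_distrib sum_subtractf sum_distrib_left)
qed

text \<open>The coefficient vector of \<open>P f\<close> is recovered from its values on the (nonempty) electrodes,
  which makes the \<open>THE\<close> in the definition of \<open>E\<close> well defined.\<close>
lemma E_op_P_op_eq:
  "E_op M e et (P_op M e f) = Pstar_op M (\<lambda>x. \<Sum>m\<in>UNIV. P_coeff f m * indicator (et m) x)"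
proof -
  define V where "V m = P_coeff f m * measure M (e m)" for m
  have nonzero: "measure M (e m) \<noteq> 0" for m
    using measure_e_pos[of m] by simp
  have "Phi_op M e V = P_op M e f"
    unfolding P_op_eq Phi_op_def V_def using nonzero by simp
  moreover have "V' = V" if V': "Phi_op M e V' = P_op M e f" for V'
  proof
    fix m
    obtain x where x: "x \<in> e m"
      using measure_e_pos[of m] by fastforce
    have "Phi_op M e V' x = V' m / measure M (e m)"
      unfolding Phi_op_def by (rule sum_indicator_e_eq[OF x])
    moreover have "P_op M e f x = P_coeff f m"
      unfolding P_op_eq by (rule sum_indicator_e_eq[OF x])
    ultimately have "V' m / measure M (e m) = P_coeff f m"
      using V' by simp
    then show "V' m = V m"
      unfolding V_def using nonzero[of m] by (simp add: field_simps)
  qed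
  ultimately have "(THE V. Phi_op M e V = P_op M e f) = V"
    by (rule the_equality)
  then show ?thesis
    unfolding E_op_def Let_def V_def using nonzero by simp
qed

lemma sum_set_integral_et:
  fixes g :: "'a \<Rightarrow> real"
  assumes "integrable M g"
  shows "(\<Sum>m\<in>UNIV. LINT y:et m|M. g y) = integral\<^sup>L M g"
proof -
  have "(\<Sum>m\<in>UNIV. LINT y:et m|M. g y)
      = integral\<^sup>L M (\<lambda>x. (\<Sum>m\<in>UNIV. 1 * indicator (et m) x) * g x)"
    using integral_step_mult[where A = et and c = "\<lambda>_. 1"] sets_et assms by simp
  also have "\<dots> = integral\<^sup>L M g"
  proof (rule integral_cong_AE)
    show "(\<lambda>x. (\<Sum>m\<in>UNIV. 1 * indicator (et m) x) * g x) \<in> borel_measurable M"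
      using sets_et assms by auto
    have "(\<Sum>m\<in>UNIV. indicator (et m) x) = (1::real)" if "x \<in> (\<Union>m. et m)" for x
      using that indicator_UN_disjoint[of UNIV et x] disjoint_et
      by (simp add: disjoint_family_on_def)
    then show "AE x in M. (\<Sum>m\<in>UNIV. 1 * indicator (et m) x) * g x = g x"
      using AE_in_et by auto
  qed (use assms in auto)
  finally show ?thesis .
qed

lemma E_op_P_op_adjoint:
  fixes f g :: "'a \<Rightarrow> real"
  assumes f: "integrable M f" and g: "integrable M g" and g0: "integral\<^sup>L M g = 0"
  shows "integral\<^sup>L M (\<lambda>x. E_op M e et (P_op M e f) x * g x) = integral\<^sup>L M (\<lambda>x. f x * Qop M e et g x)"
proof -
  define a where "a m = (LINT y:e m|M. f y)" for m
  define b where "b m = (LINT y:et m|M. g y)" for m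
  define h where "h x = (\<Sum>m\<in>UNIV. P_coeff f m * indicator (et m) x)" for x
  define K where "K = integral\<^sup>L M h / measure M (space M)"
  have hg: "integrable M (\<lambda>x. h x * g x)"
    unfolding h_def sum_distrib_right using sets_et integrable_mult_indicator[OF _ g]
    by (intro Bochner_Integration.integrable_sum) (simp add: mult.assoc)
  have b0: "(\<Sum>m\<in>UNIV. b m) = 0"
    unfolding b_def using sum_set_integral_et[OF g] g0 by simp
  have "integral\<^sup>L M (\<lambda>x. E_op M e et (P_op M e f) x * g x) = integral\<^sup>L M (\<lambda>x. h x * g x - K * g x)"
    unfolding E_op_P_op_eq Pstar_op_def h_def K_def by (simp add: algebra_simps)
  also have "\<dots> = integral\<^sup>L M (\<lambda>x. h x * g x)"
    using hg g g0 by simp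
  also have "\<dots> = (\<Sum>m\<in>UNIV. P_coeff f m * b m)"
    unfolding h_def b_def by (rule integral_step_mult) (auto simp: sets_et g)
  also have "\<dots> = (\<Sum>m\<in>UNIV. a m / measure M (e m) * b m)
      - (\<Sum>m\<in>UNIV. a m) / measure M (\<Union>m. e m) * (\<Sum>m\<in>UNIV. b m)"
    unfolding P_coeff_def a_def
    by (simp add: left_diff_distrib sum_subtractf sum_distrib_left mult.assoc)
  also have "\<dots> = (\<Sum>m\<in>UNIV. (1 / measure M (e m) * b m) * a m)"
    unfolding b0 by (simp add: algebra_simps)
  also have "\<dots> = integral\<^sup>L M (\<lambda>x. (\<Sum>m\<in>UNIV. (1 / measure M (e m) * b m) * indicator (e m) x) * f x)"
    unfolding a_def by (rule integral_step_mult[symmetric]) (auto simp: sets_e f)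
  also have "\<dots> = integral\<^sup>L M (\<lambda>x. f x * Qop M e et g x)"
    unfolding Qop_def b_def by (simp add: algebra_simps)
  finally show ?thesis .
qed

lemma L2star_E_op_P_op: "L2star M (E_op M e et (P_op M e f))"
proof -
  define h where "h x = (\<Sum>m\<in>UNIV. P_coeff f m * indicator (et m) x)" for x
  define K where "K = integral\<^sup>L M h / measure M (space M)"
  have EP: "E_op M e et (P_op M e f) = (\<lambda>x. h x - K)"
    unfolding E_op_P_op_eq h_def Pstar_op_def K_def ..
  have "L2 M (\<lambda>x. h x - K)"
    unfolding h_def by (rule L2_step_minus_const) (rule sets_et)
  moreover have "integrable M h"
    unfolding h_def by (rule integrable_step) (rule sets_et)
  then have "integral\<^sup>L M (\<lambda>x. h x - K) = 0"
    using measure_space_nonzero by (simp add: K_def emeasure_finite)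
  ultimately show ?thesis
    unfolding EP L2star_def by simp
qed

lemma L2_Qop: "L2 M (Qop M e et g)"
  using L2_step_minus_const[OF sets_e, where c = "\<lambda>m. 1 / measure M (e m) * (LINT y:et m|M. g y)"
      and k = 0]
  unfolding Qop_def by simp

lemma SUP_L2norm_diff_E_op_P_op:
  assumes S: "\<And>\<phi>. \<phi> \<in> S \<Longrightarrow> L2star M \<phi>"
  shows "(SUP \<phi>\<in>S. ereal (L2norm M (\<lambda>x. \<phi> x - E_op M e et (P_op M e \<phi>) x)))
       = (SUP g\<in>{g. L2star M g \<and> L2norm M g \<le> 1}. SUP \<phi>\<in>S.
            ereal \<bar>integral\<^sup>L M (\<lambda>x. (g x - Qop M e et g x) * \<phi> x)\<bar>)"
proof -
  let ?G = "{g. L2star M g \<and> L2norm M g \<le> 1}"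
  let ?EP = "\<lambda>\<phi>. E_op M e et (P_op M e \<phi>)"
  have L2_EP: "L2 M (?EP \<phi>)" for \<phi>
    using L2star_E_op_P_op unfolding L2star_def by blast
  have swap: "integral\<^sup>L M (\<lambda>x. (g x - Qop M e et g x) * \<phi> x)
           = integral\<^sup>L M (\<lambda>x. g x * (\<phi> x - ?EP \<phi> x))"
    if g: "g \<in> ?G" and \<phi>: "\<phi> \<in> S" for g \<phi>
  proof -
    have gL: "L2 M g" and g0: "integral\<^sup>L M g = 0" using g unfolding L2star_def by auto
    have \<phi>L: "L2 M \<phi>" using S[OF \<phi>] unfolding L2star_def by auto
    have "integral\<^sup>L M (\<lambda>x. (g x - Qop M e et g x) * \<phi> x)
        = integral\<^sup>L M (\<lambda>x. g x * \<phi> x) - integral\<^sup>L M (\<lambda>x. \<phi> x * Qop M e et g x)"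
      using L2_mult_integrable[OF gL \<phi>L] L2_mult_integrable[OF L2_Qop \<phi>L]
      by (simp add: algebra_simps)
    also have "integral\<^sup>L M (\<lambda>x. \<phi> x * Qop M e et g x) = integral\<^sup>L M (\<lambda>x. ?EP \<phi> x * g x)"
      using E_op_P_op_adjoint[OF L2_integrable[OF finite_measure_axioms \<phi>L]
          L2_integrable[OF finite_measure_axioms gL] g0] ..
    also have "integral\<^sup>L M (\<lambda>x. g x * \<phi> x) - \<dots> = integral\<^sup>L M (\<lambda>x. g x * (\<phi> x - ?EP \<phi> x))"
      using L2_mult_integrable[OF gL \<phi>L] L2_mult_integrable[OF gL L2_EP]
      by (simp add: algebra_simps)
    finally show ?thesis .
  qed
  have "(SUP g\<in>?G. SUP \<phi>\<in>S. ereal \<bar>integral\<^sup>L M (\<lambda>x. (g x - Qop M e et g x) * \<phi> x)\<bar>)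
      = (SUP \<phi>\<in>S. SUP g\<in>?G. ereal \<bar>integral\<^sup>L M (\<lambda>x. g x * (\<phi> x - ?EP \<phi> x))\<bar>)"
    using swap by (subst SUP_commute) (intro SUP_cong refl; simp)
  also have "\<dots> = (SUP \<phi>\<in>S. ereal (L2norm M (\<lambda>x. \<phi> x - ?EP \<phi> x)))"
    using S L2star_E_op_P_op
    by (intro SUP_cong refl L2norm_dual L2star_diff[OF finite_measure_axioms])
  finally show ?thesis by simp
qed

end

lemma E_op_P_op_adjoint_and_norm_identity:
  fixes M :: "'a measure" and e et :: "'m::finite \<Rightarrow> 'a set"
  assumes "electrode_system M e et \<or> emeasure M (space M) = 0"
    and S: "\<And>\<phi>. \<phi> \<in> S \<Longrightarrow> L2star M \<phi>"
  shows "(\<forall>f g. L2star M f \<longrightarrow> L2star M g \<longrightarrow>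
            integral\<^sup>L M (\<lambda>x. E_op M e et (P_op M e f) x * g x)
          = integral\<^sup>L M (\<lambda>x. f x * Qop M e et g x))
    \<and> (SUP \<phi>\<in>S. ereal (L2norm M (\<lambda>x. \<phi> x - E_op M e et (P_op M e \<phi>) x)))
      = (SUP g\<in>{g. L2star M g \<and> L2norm M g \<le> 1}. SUP \<phi>\<in>S.
          ereal \<bar>integral\<^sup>L M (\<lambda>x. (g x - Qop M e et g x) * \<phi> x)\<bar>)"
  using assms(1)
proof
  assume "electrode_system M e et"
  then interpret electrode_system M e et .
  have "integral\<^sup>L M (\<lambda>x. E_op M e et (P_op M e f) x * g x) = integral\<^sup>L M (\<lambda>x. f x * Qop M e et g x)"
    if "L2star M f" "L2star M g" for f g
    using that E_op_P_op_adjoint[of f g] L2_integrable[OF finite_measure_axioms] unfolding L2star_def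
    by blast
  then show ?thesis
    using SUP_L2norm_diff_E_op_P_op[OF S] by blast
next
  assume "emeasure M (space M) = 0"
  then have "space M \<in> null_sets M"
    by (simp add: null_setsI)
  then have zero: "integral\<^sup>L M f = 0" for f :: "'a \<Rightarrow> real"
    by (intro integral_eq_zero_AE AE_I'[of "space M"]) auto
  have "Collect (L2star M) \<noteq> {}"
    using L2star_zero by blast
  then show ?thesis
    by (simp add: zero L2norm_def)
qed

section \<open>Hausdorff measure of Lipschitz graphs\<close>

lemma sigma_sets_UNIV_borel: "sigma_sets UNIV (sets borel) = sets borel"
  by (metis sets.sigma_sets_eq space_borel)

lemma sets_hausdorff_measure [simp]: "sets (hausdorff_measure s) = sets borel"
  unfolding hausdorff_measure_def by (simp add: sets_measure_of_conv sigma_sets_UNIV_borel)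

lemma emeasure_hausdorff_measure_cases:
  fixes s :: real
  shows "(\<forall>A::'a::euclidean_space set. emeasure (hausdorff_measure s) A = 0) \<or>
    (\<forall>A::'a set\<in>sets borel. emeasure (hausdorff_measure s) A = hausdorff_outer s A)"
  unfolding hausdorff_measure_def emeasure_measure_of_conv by (auto simp: sigma_sets_UNIV_borel)

lemma emeasure_hausdorff_measure_le:
  "A \<in> sets borel \<Longrightarrow> emeasure (hausdorff_measure s) A \<le> hausdorff_outer s A"
  using emeasure_hausdorff_measure_cases[of s] by (metis order_refl zero_le)

lemma hausdorff_const_pos: "0 \<le> s \<Longrightarrow> 0 < hausdorff_const s"
  unfolding hausdorff_const_def by (intro divide_pos_pos) auto

lemma hausdorff_outer_mono: "A \<subseteq> B \<Longrightarrow> hausdorff_outer s A \<le> hausdorff_outer s B"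
  unfolding hausdorff_outer_def by (intro SUP_subset_mono order_refl INF_superset_mono) auto

lemma le_hausdorff_outer:
  assumes "\<And>C. A \<subseteq> (\<Union>i. C i) \<Longrightarrow> \<forall>i. bounded (C i) \<and> diameter (C i) \<le> 1 \<Longrightarrow>
              K \<le> (\<Sum>i. ennreal (hausdorff_const s * diameter (C i) powr s))"
  shows "K \<le> hausdorff_outer s A"
  unfolding hausdorff_outer_def by (rule SUP_upper2[of 1]) (auto intro!: INF_greatest assms)

lemma hausdorff_outer_le_finite_cover:
  fixes A :: "'a::euclidean_space set" and K :: real
  assumes s: "0 \<le> s"
    and cover: "\<And>\<delta>. 0 < \<delta> \<Longrightarrow> \<exists>I (C :: 'i \<Rightarrow> 'a set). finite I \<and> A \<subseteq> (\<Union>i\<in>I. C i) \<and>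
        (\<forall>i\<in>I. bounded (C i) \<and> diameter (C i) \<le> \<delta>) \<and>
        (\<Sum>i\<in>I. hausdorff_const s * diameter (C i) powr s) \<le> K"
  shows "hausdorff_outer s A \<le> ennreal K"
  unfolding hausdorff_outer_def
proof (rule SUP_least)
  fix \<delta> :: real
  assume "\<delta> \<in> {0<..}"
  then have \<delta>: "0 < \<delta>" by simp
  obtain I and C :: "'i \<Rightarrow> 'a set" where I: "finite I" and A: "A \<subseteq> (\<Union>i\<in>I. C i)"
    and C: "\<forall>i\<in>I. bounded (C i) \<and> diameter (C i) \<le> \<delta>"
    and K: "(\<Sum>i\<in>I. hausdorff_const s * diameter (C i) powr s) \<le> K"
    using cover[OF \<delta>] by blast
  obtain g where g: "bij_betw g {0..<card I} I"
    using ex_bij_betw_nat_finite[OF I] by blast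
  define C' where "C' n = (if n < card I then C (g n) else {})" for n
  have "A \<subseteq> (\<Union>n. C' n)"
  proof
    fix y assume "y \<in> A"
    then obtain i where "i \<in> I" "y \<in> C i" using A by blast
    moreover obtain n where "n < card I" "g n = i"
      using \<open>i \<in> I\<close> g unfolding bij_betw_def by force
    ultimately show "y \<in> (\<Union>n. C' n)" unfolding C'_def by auto
  qed
  moreover have "\<forall>n. bounded (C' n) \<and> diameter (C' n) \<le> \<delta>"
    using C g \<delta> unfolding C'_def bij_betw_def by auto
  moreover have "(\<Sum>n. ennreal (hausdorff_const s * diameter (C' n) powr s))
      = ennreal (\<Sum>i\<in>I. hausdorff_const s * diameter (C i) powr s)"
  proof -
    have "(\<Sum>n. ennreal (hausdorff_const s * diameter (C' n) powr s))
        = (\<Sum>n\<in>{0..<card I}. ennreal (hausdorff_const s * diameter (C (g n)) powr s))"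
      by (subst suminf_finite[of "{0..<card I}"]) (auto simp: C'_def)
    also have "\<dots> = ennreal (\<Sum>n\<in>{0..<card I}. hausdorff_const s * diameter (C (g n)) powr s)"
      using hausdorff_const_pos[OF s] by (intro sum_ennreal) simp
    also have "\<dots> = ennreal (\<Sum>i\<in>I. hausdorff_const s * diameter (C i) powr s)"
      using sum.reindex_bij_betw[OF g, of "\<lambda>i. hausdorff_const s * diameter (C i) powr s"]
      by simp
    finally show ?thesis .
  qed
  ultimately show "(INF C\<in>{C. A \<subseteq> (\<Union>i. C i) \<and> (\<forall>i. bounded (C i) \<and> diameter (C i) \<le> \<delta>)}.
      \<Sum>i. ennreal (hausdorff_const s * diameter (C i) powr s)) \<le> ennreal K"
    using K by (intro INF_lower2[of C']) (auto intro: ennreal_leI)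
qed

definition grid_cell :: "('a::euclidean_space \<Rightarrow> 'a) \<Rightarrow> 'a \<Rightarrow> real \<Rightarrow> ('a \<Rightarrow> int) \<Rightarrow> 'a set" where
  "grid_cell F b h k = {y. \<forall>i\<in>Basis - {b}. \<lfloor>(F y \<bullet> i) / h\<rfloor> = k i}"

lemma grid_cell_index:
  assumes h: "0 < h" and y: "norm (F y) < real n * h"
  shows "\<exists>k\<in>(Basis - {b}) \<rightarrow>\<^sub>E {-int n..<int n}. y \<in> grid_cell F b h k"
proof
  let ?k = "restrict (\<lambda>i. \<lfloor>(F y \<bullet> i) / h\<rfloor>) (Basis - {b})"
  show "y \<in> grid_cell F b h ?k"
    unfolding grid_cell_def by simp
  show "?k \<in> (Basis - {b}) \<rightarrow>\<^sub>E {-int n..<int n}"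
    unfolding restrict_PiE_iff
  proof
    fix i assume "i \<in> Basis - {b}"
    then have "\<bar>F y \<bullet> i\<bar> < real n * h"
      using Basis_le_norm[of i "F y"] y by auto
    then have "- real n < (F y \<bullet> i) / h" "(F y \<bullet> i) / h < real n"
      using h by (auto simp: field_simps)
    then show "\<lfloor>(F y \<bullet> i) / h\<rfloor> \<in> {-int n..<int n}"
      by (auto simp: le_floor_iff floor_less_iff)
  qed
qed

lemma norm_diff_le_grid_cell:
  fixes F :: "'a::euclidean_space \<Rightarrow> 'a" and h :: real
  assumes h: "0 < h" and y: "y \<in> grid_cell F b h k" and z: "z \<in> grid_cell F b h k"
    and b: "F y \<bullet> b = F z \<bullet> b"
  shows "norm (F y - F z) \<le> real DIM('a) * h"
proof -
  have coord: "\<bar>(F y - F z) \<bullet> i\<bar> \<le> h" if i: "i \<in> Basis" for i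
  proof (cases "i = b")
    case True
    then show ?thesis using b h by (simp add: inner_diff_left)
  next
    case False
    then have "\<lfloor>(F y \<bullet> i) / h\<rfloor> = \<lfloor>(F z \<bullet> i) / h\<rfloor>"
      using y z i unfolding grid_cell_def by auto
    then have "\<bar>(F y \<bullet> i) / h - (F z \<bullet> i) / h\<bar> < 1"
      by linarith
    then show ?thesis
      using h by (simp add: inner_diff_left field_simps)
  qed
  have "norm (F y - F z) \<le> (\<Sum>i\<in>Basis. \<bar>(F y - F z) \<bullet> i\<bar>)"
    by (rule norm_le_l1)
  also have "\<dots> \<le> (\<Sum>i\<in>(Basis::'a set). h)"
    using coord by (intro sum_mono) auto
  finally show ?thesis by simp
qed

lemma inverse_lipschitz_grid_cell:
  fixes F :: "'a::euclidean_space \<Rightarrow> 'a" and h :: real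
  assumes h: "0 < h" and Kc: "0 \<le> Kc"
    and Fb: "\<And>y. y \<in> A \<Longrightarrow> F y \<bullet> b = 0"
    and Lip: "\<And>y z. y \<in> A \<Longrightarrow> z \<in> A \<Longrightarrow> norm (y - z) \<le> Kc * norm (F y - F z)"
  shows "bounded (A \<inter> grid_cell F b h k)" "diameter (A \<inter> grid_cell F b h k) \<le> Kc * DIM('a) * h"
proof -
  have close: "norm (y - z) \<le> Kc * DIM('a) * h" if "y \<in> A \<inter> grid_cell F b h k" "z \<in> A \<inter> grid_cell F b h k"
    for y z
  proof -
    have "norm (F y - F z) \<le> DIM('a) * h"
      using norm_diff_le_grid_cell[OF h, of y F b k z] that Fb by simp
    then have "Kc * norm (F y - F z) \<le> Kc * (DIM('a) * h)"
      using Kc by (rule mult_left_mono)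
    then show ?thesis
      using Lip[of y z] that by (simp add: mult.assoc)
  qed
  then show "diameter (A \<inter> grid_cell F b h k) \<le> Kc * DIM('a) * h"
    using Kc h by (intro diameter_le) auto
  show "bounded (A \<inter> grid_cell F b h k)"
  proof (cases "A \<inter> grid_cell F b h k = {}")
    case False
    then obtain y where "y \<in> A \<inter> grid_cell F b h k"
      by blast
    then have "A \<inter> grid_cell F b h k \<subseteq> cball y (Kc * DIM('a) * h)"
      using close by (auto simp: dist_norm)
    then show ?thesis
      using bounded_cball bounded_subset by blast
  qed simp
qed

lemma hausdorff_outer_lt_top_if_inverse_lipschitz:
  fixes A :: "'a::euclidean_space set" and F :: "'a \<Rightarrow> 'a"
  assumes N2: "2 \<le> DIM('a)" and b: "b \<in> Basis" and Kc: "0 \<le> Kc" and r: "0 < r"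
    and Fb: "\<And>y. y \<in> A \<Longrightarrow> F y \<bullet> b = 0"
    and Fr: "\<And>y. y \<in> A \<Longrightarrow> norm (F y) < r"
    and Lip: "\<And>y z. y \<in> A \<Longrightarrow> z \<in> A \<Longrightarrow> norm (y - z) \<le> Kc * norm (F y - F z)"
  shows "hausdorff_outer (real DIM('a) - 1) A < \<infinity>"
proof -
  define N where "N = real DIM('a)"
  define d where "d = DIM('a) - 1"
  have d: "real DIM('a) - 1 = real d" "d \<noteq> 0"
    using N2 unfolding d_def by auto
  define hc where "hc = hausdorff_const (real d)"
  have hc: "0 < hc"
    unfolding hc_def by (rule hausdorff_const_pos) simp
  have KN: "0 \<le> Kc * N"
    using Kc by (simp add: N_def)
  \<comment> \<open>\<open>(2n)\<^sup>d\<close> cells of diameter \<open>\<le> Kc N h\<close> suffice, where \<open>n h < r + h \<le> r + 1\<close>.\<close>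
  have "hausdorff_outer (real d) A \<le> ennreal (hc * (Kc * N * (2 * r + 2)) ^ d)"
  proof (rule hausdorff_outer_le_finite_cover[where 'i = "'a \<Rightarrow> int"])
    fix \<delta> :: real
    assume \<delta>: "0 < \<delta>"
    define h where "h = min 1 (\<delta> / (Kc * N + 1))"
    have h: "0 < h" "h \<le> 1"
      unfolding h_def using \<delta> KN by auto
    have "Kc * N * h \<le> Kc * N * (\<delta> / (Kc * N + 1))"
      unfolding h_def using KN by (intro mult_left_mono) auto
    also have "\<dots> \<le> \<delta>"
      using KN \<delta> by (simp add: field_simps)
    finally have mesh: "Kc * N * h \<le> \<delta>" .
    define n where "n = nat \<lceil>r / h\<rceil>"
    have "real n = of_int \<lceil>r / h\<rceil>"
      unfolding n_def using r h by simp
    then have "r / h \<le> real n" "real n < r / h + 1"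
      by linarith+
    then have rn: "r \<le> real n * h" and nr: "real n * h < r + h"
      using h by (simp_all add: field_simps)
    define I where "I = (Basis - {b}) \<rightarrow>\<^sub>E {-int n..<int n}"
    define C where "C k = A \<inter> grid_cell F b h k" for k
    have I: "finite I" "card I = (2 * n) ^ d"
      unfolding I_def d_def using b
      by (auto intro!: finite_PiE simp: card_PiE card_Diff_singleton nat_mult_distrib)
    have cover: "A \<subseteq> (\<Union>k\<in>I. C k)"
      using grid_cell_index[OF h(1), of F _ n b] Fr rn unfolding C_def I_def by fastforce
    have bdd: "bounded (C k)" and diam: "diameter (C k) \<le> Kc * N * h" for k
      using inverse_lipschitz_grid_cell[OF h(1) Kc, of A F b k] Fb Lip unfolding C_def N_def by auto
    have "diameter (C k) powr real d \<le> (Kc * N * h) ^ d" for k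
      using diameter_ge_0[OF bdd] diam d(2) by (simp add: powr_realpow' power_mono)
    then have "(\<Sum>k\<in>I. hc * diameter (C k) powr real d) \<le> (\<Sum>k\<in>I. hc * (Kc * N * h) ^ d)"
      using hc by (intro sum_mono mult_left_mono) auto
    also have "\<dots> = hc * (2 * real n * (Kc * N * h)) ^ d"
      using I(2) by (simp add: power_mult_distrib)
    also have "\<dots> \<le> hc * (Kc * N * (2 * r + 2)) ^ d"
    proof -
      have "2 * real n * (Kc * N * h) = Kc * N * (2 * (real n * h))"
        by (simp add: algebra_simps)
      also have "\<dots> \<le> Kc * N * (2 * r + 2)"
        using KN nr h(2) by (intro mult_left_mono) auto
      finally show ?thesis
        using KN h hc by (intro mult_left_mono power_mono) auto
    qed
    finally show "\<exists>I (C :: ('a \<Rightarrow> int) \<Rightarrow> 'a set). finite I \<and> A \<subseteq> (\<Union>k\<in>I. C k) \<and>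
        (\<forall>k\<in>I. bounded (C k) \<and> diameter (C k) \<le> \<delta>) \<and>
        (\<Sum>k\<in>I. hausdorff_const (real d) * diameter (C k) powr real d)
          \<le> hc * (Kc * N * (2 * r + 2)) ^ d"
      using I(1) cover bdd order_trans[OF diam mesh] unfolding hc_def by blast
  qed simp
  then show ?thesis
    unfolding d(1) by (rule le_less_trans) simp
qed

definition perp_proj :: "'a::euclidean_space \<Rightarrow> 'a \<Rightarrow> 'a" where
  "perp_proj b v = v - (v \<bullet> b) *\<^sub>R b"

lemma inner_perp_proj_Basis_self: "b \<in> Basis \<Longrightarrow> perp_proj b v \<bullet> b = 0"
  unfolding perp_proj_def by (simp add: inner_diff_left)

lemma inner_perp_proj_Basis_other: "b \<in> Basis \<Longrightarrow> j \<in> Basis \<Longrightarrow> j \<noteq> b \<Longrightarrow> perp_proj b v \<bullet> j = v \<bullet> j"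
  unfolding perp_proj_def by (simp add: inner_diff_left inner_not_same_Basis)

lemma perp_proj_diff: "perp_proj b u - perp_proj b v = perp_proj b (u - v)"
  unfolding perp_proj_def by (simp add: inner_diff_left algebra_simps)

lemma perp_proj_add_inner: "perp_proj b v + (v \<bullet> b) *\<^sub>R b = v"
  unfolding perp_proj_def by simp

lemma norm_perp_proj_le:
  assumes "b \<in> Basis"
  shows "norm (perp_proj b v) \<le> norm v"
proof -
  have "perp_proj b v \<bullet> perp_proj b v = v \<bullet> v - (v \<bullet> b)\<^sup>2"
    unfolding perp_proj_def using assms
    by (simp add: inner_diff_left inner_diff_right power2_eq_square inner_commute)
  then show ?thesis unfolding norm_le by simp
qed

lemma norm_perp_proj_diff_le: "b \<in> Basis \<Longrightarrow> norm (perp_proj b u - perp_proj b v) \<le> norm (u - v)"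
  unfolding perp_proj_diff by (rule norm_perp_proj_le)

definition slab :: "'a::euclidean_space \<Rightarrow> 'a \<Rightarrow> real \<Rightarrow> 'a set" where
  "slab b c w = cbox (\<Sum>j\<in>Basis. (if j = b then 0 else c \<bullet> j - w) *\<^sub>R j)
                     (\<Sum>j\<in>Basis. (if j = b then 1 else c \<bullet> j + w) *\<^sub>R j)"

lemma mem_slab:
  assumes "b \<in> Basis"
  shows "z \<in> slab b c w \<longleftrightarrow> 0 \<le> z \<bullet> b \<and> z \<bullet> b \<le> 1 \<and> (\<forall>j\<in>Basis - {b}. \<bar>z \<bullet> j - c \<bullet> j\<bar> \<le> w)"
  using assms unfolding slab_def mem_box by (auto simp: abs_le_iff) (smt (verit) DiffI singletonD)+

lemma emeasure_slab:
  fixes c :: "'a::euclidean_space"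
  assumes b: "b \<in> Basis" and w: "0 \<le> w"
  shows "emeasure lborel (slab b c w) = ennreal ((2 * w) ^ (DIM('a) - 1))"
proof -
  define lo :: 'a where "lo = (\<Sum>j\<in>Basis. (if j = b then 0 else c \<bullet> j - w) *\<^sub>R j)"
  define hi :: 'a where "hi = (\<Sum>j\<in>Basis. (if j = b then 1 else c \<bullet> j + w) *\<^sub>R j)"
  have lo: "lo \<bullet> j = (if j = b then 0 else c \<bullet> j - w)"
    and hi: "hi \<bullet> j = (if j = b then 1 else c \<bullet> j + w)" if "j \<in> Basis" for j
    unfolding lo_def hi_def using that by simp_all
  have "emeasure lborel (slab b c w) = ennreal (\<Prod>j\<in>Basis. (hi - lo) \<bullet> j)"
    unfolding slab_def lo_def[symmetric] hi_def[symmetric]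
    using emeasure_lborel_cbox_eq[of lo hi] lo hi w by simp
  also have "(\<Prod>j\<in>Basis. (hi - lo) \<bullet> j) = (\<Prod>j\<in>Basis. (if j = b then 1 else 2 * w))"
    using lo hi by (intro prod.cong refl) (simp add: inner_diff_left)
  also have "\<dots> = (\<Prod>j\<in>Basis - {b}. 2 * w)"
    using b by (simp add: prod.If_cases Int_absorb1 Diff_eq Compl_eq)
  also have "\<dots> = (2 * w) ^ (DIM('a) - 1)"
    using b by (simp add: card_Diff_singleton)
  finally show ?thesis .
qed

lemma slab_subset_UN_slab:
  fixes F :: "'a::euclidean_space \<Rightarrow> 'a"
  assumes b: "b \<in> Basis" and pc: "pc \<bullet> b = 0" and w: "0 \<le> w" "real DIM('a) * w < \<rho>"
    and F1: "\<And>y z. norm (F y - F z) \<le> norm (y - z)"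
    and onto: "\<And>p. p \<bullet> b = 0 \<Longrightarrow> norm (p - pc) < \<rho> \<Longrightarrow> p \<in> F ` A"
    and cover: "A \<subseteq> (\<Union>i. C i)" and bdd: "\<And>i. bounded (C i)" and q: "\<And>i. C i \<noteq> {} \<Longrightarrow> q i \<in> C i"
  shows "slab b pc w \<subseteq> (\<Union>i. slab b (F (q i)) (diameter (C i)))"
proof
  fix z
  assume z: "z \<in> slab b pc w"
  define p where "p = perp_proj b z"
  have p_coord: "p \<bullet> j = z \<bullet> j" if "j \<in> Basis - {b}" for j
    unfolding p_def using b that by (simp add: inner_perp_proj_Basis_other)
  have "norm (p - pc) \<le> (\<Sum>j\<in>Basis. \<bar>(p - pc) \<bullet> j\<bar>)"
    by (rule norm_le_l1)
  also have "\<dots> \<le> (\<Sum>j\<in>(Basis::'a set). w)"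
  proof (rule sum_mono)
    fix j :: 'a
    assume j: "j \<in> Basis"
    show "\<bar>(p - pc) \<bullet> j\<bar> \<le> w"
    proof (cases "j = b")
      case True
      then show ?thesis
        using b pc w unfolding p_def by (simp add: inner_diff_left inner_perp_proj_Basis_self)
    next
      case False
      then show ?thesis
        using z j b p_coord[of j] unfolding mem_slab[OF b] by (simp add: inner_diff_left)
    qed
  qed
  also have "\<dots> < \<rho>"
    using w by simp
  finally obtain y where y: "y \<in> A" "p = F y"
    using onto[of p] b unfolding p_def by (auto simp: inner_perp_proj_Basis_self)
  then obtain i where yi: "y \<in> C i"
    using cover by blast
  then have qi: "q i \<in> C i"
    using q by blast
  have "\<bar>z \<bullet> j - F (q i) \<bullet> j\<bar> \<le> diameter (C i)" if j: "j \<in> Basis - {b}" for j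
  proof -
    have "\<bar>z \<bullet> j - F (q i) \<bullet> j\<bar> = \<bar>(F y - F (q i)) \<bullet> j\<bar>"
      using p_coord[OF j] y by (simp add: inner_diff_left)
    also have "\<dots> \<le> norm (F y - F (q i))"
      using j by (simp add: Basis_le_norm)
    also have "\<dots> \<le> norm (y - q i)"
      by (rule F1)
    also have "\<dots> \<le> diameter (C i)"
      using diameter_bounded_bound[OF bdd yi qi] by (simp add: dist_norm)
    finally show ?thesis .
  qed
  then have "z \<in> slab b (F (q i)) (diameter (C i))"
    using z unfolding mem_slab[OF b] by simp
  then show "z \<in> (\<Union>i. slab b (F (q i)) (diameter (C i)))"
    by blast
qed

lemma hausdorff_outer_pos_if_lipschitz_onto:
  fixes A :: "'a::euclidean_space set" and F :: "'a \<Rightarrow> 'a"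
  assumes N2: "2 \<le> DIM('a)" and b: "b \<in> Basis" and \<rho>: "0 < \<rho>" and pc: "pc \<bullet> b = 0"
    and F1: "\<And>y z. norm (F y - F z) \<le> norm (y - z)"
    and onto: "\<And>p. p \<bullet> b = 0 \<Longrightarrow> norm (p - pc) < \<rho> \<Longrightarrow> p \<in> F ` A"
  shows "0 < hausdorff_outer (real DIM('a) - 1) A"
proof -
  define d where "d = DIM('a) - 1"
  have d: "real DIM('a) - 1 = real d" "d \<noteq> 0"
    using N2 unfolding d_def by auto
  define hc where "hc = hausdorff_const (real d)"
  have hc: "0 < hc"
    unfolding hc_def by (rule hausdorff_const_pos) simp
  define \<rho>' where "\<rho>' = \<rho> / (2 * real DIM('a))"
  have \<rho>': "0 < \<rho>'" "real DIM('a) * \<rho>' < \<rho>"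
    unfolding \<rho>'_def using \<rho> by (auto simp: field_simps)
  have "ennreal (hc / 2 ^ d) * ennreal ((2 * \<rho>') ^ d) \<le> hausdorff_outer (real d) A"
  proof (rule le_hausdorff_outer)
    fix C :: "nat \<Rightarrow> 'a set"
    assume cover: "A \<subseteq> (\<Union>i. C i)" and bd: "\<forall>i. bounded (C i) \<and> diameter (C i) \<le> 1"
    define q where "q i = (SOME q. q \<in> C i)" for i
    have diam: "0 \<le> diameter (C i)" for i
      using bd diameter_ge_0 by blast
    have "slab b pc \<rho>' \<subseteq> (\<Union>i. slab b (F (q i)) (diameter (C i)))"
      using b pc \<rho>' F1 onto cover bd unfolding q_def
      by (intro slab_subset_UN_slab) (auto intro: someI_ex)
    then have "emeasure lborel (slab b pc \<rho>') \<le> emeasure lborel (\<Union>i. slab b (F (q i)) (diameter (C i)))"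
      by (rule emeasure_mono) (simp add: slab_def)
    also have "\<dots> \<le> (\<Sum>i. emeasure lborel (slab b (F (q i)) (diameter (C i))))"
      by (rule emeasure_subadditive_countably) (auto simp: slab_def)
    finally have "ennreal ((2 * \<rho>') ^ d) \<le> (\<Sum>i. ennreal ((2 * diameter (C i)) ^ d))"
      using emeasure_slab[OF b] diam \<rho>' unfolding d_def by simp
    then have "ennreal (hc / 2 ^ d) * ennreal ((2 * \<rho>') ^ d)
        \<le> ennreal (hc / 2 ^ d) * (\<Sum>i. ennreal ((2 * diameter (C i)) ^ d))"
      by (rule mult_left_mono) simp
    also have "\<dots> = (\<Sum>i. ennreal (hc / 2 ^ d) * ennreal ((2 * diameter (C i)) ^ d))"
      by (rule ennreal_suminf_cmult[symmetric])
    also have "\<dots> = (\<Sum>i. ennreal (hc * diameter (C i) powr real d))"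
    proof -
      have "ennreal (hc / 2 ^ d) * ennreal ((2 * diameter (C i)) ^ d)
          = ennreal (hc * diameter (C i) powr real d)" for i
      proof -
        have "hc * diameter (C i) powr real d = hc / 2 ^ d * (2 * diameter (C i)) ^ d"
          using diam[of i] d(2) by (simp add: powr_realpow' power_mult_distrib)
        then show ?thesis
          using hc diam[of i] by (simp only:) (rule ennreal_mult[symmetric]; simp)
      qed
      then show ?thesis by simp
    qed
    finally show "ennreal (hc / 2 ^ d) * ennreal ((2 * \<rho>') ^ d)
        \<le> (\<Sum>i. ennreal (hausdorff_const (real d) * diameter (C i) powr real d))"
      unfolding hc_def[symmetric] .
  qed
  moreover have "0 < ennreal (hc / 2 ^ d) * ennreal ((2 * \<rho>') ^ d)"
    using hc \<rho>' by (simp add: ennreal_zero_less_mult_iff)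
  ultimately show ?thesis
    unfolding d(1) by (rule less_le_trans[rotated])
qed

section \<open>The boundary of a Lipschitz domain\<close>

locale lipschitz_graph_patch =
  fixes \<Omega> :: "'a::euclidean_space set" and T :: "'a \<Rightarrow> 'a" and b :: 'a and \<phi> :: "'a \<Rightarrow> real"
    and L :: real and x :: 'a and r :: real
  assumes open_domain: "open \<Omega>"
    and isometry: "\<And>y z. dist (T y) (T z) = dist y z"
    and surj_T: "surj T"
    and b_Basis: "b \<in> Basis"
    and lipschitz: "L-lipschitz_on {z. z \<bullet> b = 0} \<phi>"
    and center: "x \<in> frontier \<Omega>"
    and radius: "0 < r"
    and below_graph: "\<Omega> \<inter> ball x r = {y \<in> ball x r. T y \<bullet> b < \<phi> (perp_proj b (T y))}"
begin

lemma L_nonneg: "0 \<le> L"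
  using lipschitz lipschitz_on_nonneg by blast

lemma norm_T_diff: "norm (T y - T z) = norm (y - z)"
  using isometry by (simp add: dist_norm)

lemma phi_diff_le: "p \<bullet> b = 0 \<Longrightarrow> q \<bullet> b = 0 \<Longrightarrow> \<bar>\<phi> p - \<phi> q\<bar> \<le> L * norm (p - q)"
  using lipschitz_onD[OF lipschitz, of p q] by (simp add: dist_norm dist_real_def)

lemma phi_perp_proj_diff_le: "\<bar>\<phi> (perp_proj b u) - \<phi> (perp_proj b v)\<bar> \<le> L * norm (u - v)"
  using phi_diff_le[of "perp_proj b u" "perp_proj b v"] norm_perp_proj_diff_le[OF b_Basis, of u v]
    L_nonneg b_Basis
  by (smt (verit) inner_perp_proj_Basis_self mult_left_mono)

lemma not_in_domain_if_frontier: "y \<in> frontier \<Omega> \<Longrightarrow> y \<notin> \<Omega>"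
  using open_domain by (simp add: frontier_def interior_open)

text \<open>Points of \<open>\<Omega>\<close> near \<open>y\<close> lie below the graph, so \<open>y\<close> cannot lie strictly above it.\<close>
lemma frontier_on_graph:
  assumes y: "y \<in> frontier \<Omega>" "y \<in> ball x r"
  shows "T y \<bullet> b = \<phi> (perp_proj b (T y))"
proof (rule ccontr)
  assume ne: "T y \<bullet> b \<noteq> \<phi> (perp_proj b (T y))"
  have "\<not> T y \<bullet> b < \<phi> (perp_proj b (T y))"
    using y below_graph not_in_domain_if_frontier by blast
  with ne have g: "0 < T y \<bullet> b - \<phi> (perp_proj b (T y))" (is "0 < ?g")
    by simp
  obtain \<epsilon> where \<epsilon>: "0 < \<epsilon>" "ball y \<epsilon> \<subseteq> ball x r"
    using y(2) open_ball open_contains_ball by blast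
  have "y \<in> closure \<Omega>"
    using y(1) by (simp add: frontier_def)
  then obtain z where z: "z \<in> \<Omega>" "dist y z < min \<epsilon> (?g / (1 + L))"
    using closure_approachableD[of y \<Omega> "min \<epsilon> (?g / (1 + L))"] g \<epsilon> L_nonneg by auto
  then have "z \<in> \<Omega> \<inter> ball x r"
    using \<epsilon> by auto
  then have below: "T z \<bullet> b < \<phi> (perp_proj b (T z))"
    using below_graph by blast
  have close: "(1 + L) * norm (z - y) < ?g"
    using z(2) L_nonneg by (simp add: dist_norm norm_minus_commute field_simps)
  have "\<bar>T z \<bullet> b - T y \<bullet> b\<bar> \<le> norm (z - y)"
    using Basis_le_norm[OF b_Basis, of "T z - T y"] norm_T_diff[of z y] by (simp add: inner_diff_left)
  moreover have "\<bar>\<phi> (perp_proj b (T z)) - \<phi> (perp_proj b (T y))\<bar> \<le> L * norm (z - y)"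
    using phi_perp_proj_diff_le[of "T z" "T y"] norm_T_diff[of z y] by simp
  ultimately show False
    using below close by (simp add: algebra_simps abs_le_iff)
qed

lemma graph_in_frontier:
  assumes p: "p \<bullet> b = 0" and Ty: "T y = p + \<phi> p *\<^sub>R b" and y: "y \<in> ball x r"
  shows "y \<in> frontier \<Omega>"
proof -
  have bb: "b \<bullet> b = 1"
    using b_Basis by simp
  have Ty_b: "T y \<bullet> b = \<phi> p" and proj_Ty: "perp_proj b (T y) = p"
    unfolding Ty perp_proj_def using p bb by (simp_all add: inner_add_left)
  have "y \<notin> \<Omega>"
  proof
    assume "y \<in> \<Omega>"
    then have "T y \<bullet> b < \<phi> (perp_proj b (T y))"
      using below_graph y by blast
    then show False
      using Ty_b proj_Ty by simp
  qed
  moreover have "y \<in> closure \<Omega>"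
    unfolding closure_approachable
  proof (intro allI impI)
    fix \<epsilon> :: real
    assume \<epsilon>: "0 < \<epsilon>"
    define t where "t = min (\<epsilon> / 2) ((r - dist x y) / 2)"
    have t: "0 < t" "t < \<epsilon>" "dist x y + t < r"
      unfolding t_def using \<epsilon> y by (auto simp: min_def field_simps)
    obtain z where Tz: "T z = T y - t *\<^sub>R b"
      using surj_T by (metis surjD)
    have dzy: "dist z y = t"
      using norm_T_diff[of z y] Tz b_Basis t by (simp add: dist_norm)
    then have "z \<in> ball x r"
      using dist_triangle[of x z y] t by (simp add: dist_commute)
    moreover have "T z \<bullet> b < \<phi> (perp_proj b (T z))"
    proof -
      have "perp_proj b (T z) = p"
        using proj_Ty unfolding Tz perp_proj_def by (simp add: inner_diff_left bb algebra_simps)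
      moreover have "T z \<bullet> b = \<phi> p - t"
        unfolding Tz using Ty_b bb by (simp add: inner_diff_left)
      ultimately show ?thesis
        using t by simp
    qed
    ultimately have "z \<in> \<Omega>"
      using below_graph by blast
    then show "\<exists>z\<in>\<Omega>. dist z y < \<epsilon>"
      using dzy t by auto
  qed
  ultimately show ?thesis
    using open_domain by (simp add: frontier_def interior_open)
qed

lemma exists_frontier_over:
  assumes p: "p \<bullet> b = 0" and \<rho>: "\<rho> \<le> r" and close: "(1 + L) * norm (p - perp_proj b (T x)) < \<rho>"
  shows "\<exists>y\<in>frontier \<Omega> \<inter> ball x \<rho>. perp_proj b (T y) = p"
proof -
  define p0 where "p0 = perp_proj b (T x)"
  have p0: "p0 \<bullet> b = 0"
    unfolding p0_def using b_Basis by (rule inner_perp_proj_Basis_self)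
  have Tx: "T x = p0 + \<phi> p0 *\<^sub>R b"
    using perp_proj_add_inner[of b "T x"] frontier_on_graph[OF center] radius unfolding p0_def by simp
  obtain y where Ty: "T y = p + \<phi> p *\<^sub>R b"
    using surj_T by (metis surjD)
  have "norm (T y - T x) = norm ((p - p0) + (\<phi> p - \<phi> p0) *\<^sub>R b)"
    unfolding Ty Tx by (simp add: algebra_simps)
  also have "\<dots> \<le> norm (p - p0) + \<bar>\<phi> p - \<phi> p0\<bar>"
    using norm_triangle_ineq[of "p - p0" "(\<phi> p - \<phi> p0) *\<^sub>R b"] b_Basis by simp
  also have "\<dots> \<le> (1 + L) * norm (p - p0)"
    using phi_diff_le[OF p p0] by (simp add: algebra_simps)
  finally have "dist x y < \<rho>"
    using close norm_T_diff[of y x] unfolding p0_def by (simp add: dist_norm norm_minus_commute)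
  moreover have "perp_proj b (T y) = p"
    unfolding Ty perp_proj_def using p b_Basis by (simp add: inner_add_left)
  ultimately show ?thesis
    using graph_in_frontier[OF p Ty] \<rho> by auto
qed

lemma hausdorff_outer_frontier_lt_top:
  assumes "2 \<le> DIM('a)"
  shows "hausdorff_outer (real DIM('a) - 1) (frontier \<Omega> \<inter> ball x r) < \<infinity>"
proof (rule hausdorff_outer_lt_top_if_inverse_lipschitz[OF assms b_Basis _ radius,
      where F = "\<lambda>y. perp_proj b (T y) - perp_proj b (T x)" and Kc = "1 + L"])
  show "0 \<le> 1 + L"
    using L_nonneg by simp
  fix y z
  assume y: "y \<in> frontier \<Omega> \<inter> ball x r" and z: "z \<in> frontier \<Omega> \<inter> ball x r"
  show "(perp_proj b (T y) - perp_proj b (T x)) \<bullet> b = 0"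
    using b_Basis by (simp add: inner_diff_left inner_perp_proj_Basis_self)
  show "norm (perp_proj b (T y) - perp_proj b (T x)) < r"
    using norm_perp_proj_diff_le[OF b_Basis, of "T y" "T x"] norm_T_diff[of y x] y
    by (simp add: dist_norm norm_minus_commute)
  let ?\<Delta> = "perp_proj b (T y) - perp_proj b (T z)"
  have "T y - T z = ?\<Delta> + (\<phi> (perp_proj b (T y)) - \<phi> (perp_proj b (T z))) *\<^sub>R b"
    using perp_proj_add_inner[of b "T y"] perp_proj_add_inner[of b "T z"]
      frontier_on_graph[of y] frontier_on_graph[of z] y z
    by (simp add: algebra_simps)
  then have "norm (T y - T z) \<le> norm ?\<Delta> + \<bar>\<phi> (perp_proj b (T y)) - \<phi> (perp_proj b (T z))\<bar>"
    using norm_triangle_ineq[of ?\<Delta> "(\<phi> (perp_proj b (T y)) - \<phi> (perp_proj b (T z))) *\<^sub>R b"]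
      b_Basis by simp
  also have "\<dots> \<le> (1 + L) * norm ?\<Delta>"
    using phi_diff_le[of "perp_proj b (T y)" "perp_proj b (T z)"] b_Basis
    by (simp add: inner_perp_proj_Basis_self algebra_simps)
  finally show "norm (y - z) \<le> (1 + L) *
      norm (perp_proj b (T y) - perp_proj b (T x) - (perp_proj b (T z) - perp_proj b (T x)))"
    using norm_T_diff[of y z] by simp
qed

lemma hausdorff_outer_frontier_pos:
  assumes "2 \<le> DIM('a)" and \<rho>: "0 < \<rho>" "\<rho> \<le> r"
  shows "0 < hausdorff_outer (real DIM('a) - 1) (frontier \<Omega> \<inter> ball x \<rho>)"
proof (rule hausdorff_outer_pos_if_lipschitz_onto[OF assms(1) b_Basis _
      inner_perp_proj_Basis_self[OF b_Basis], where F = "\<lambda>y. perp_proj b (T y)" and \<rho> = "\<rho> / (1 + L)"])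
  show "0 < \<rho> / (1 + L)"
    using \<rho> L_nonneg by simp
  show "norm (perp_proj b (T y) - perp_proj b (T z)) \<le> norm (y - z)" for y z
    using norm_perp_proj_diff_le[OF b_Basis, of "T y" "T z"] norm_T_diff[of y z] by simp
  fix p
  assume "p \<bullet> b = 0" "norm (p - perp_proj b (T x)) < \<rho> / (1 + L)"
  then show "p \<in> (\<lambda>y. perp_proj b (T y)) ` (frontier \<Omega> \<inter> ball x \<rho>)"
    using exists_frontier_over[of p \<rho>] \<rho> L_nonneg by (force simp: field_simps)
qed

end

lemma lip_domain_class_patch:
  fixes \<Omega> :: "'a::euclidean_space set"
  assumes \<Omega>: "lip_domain_class r L R \<Omega>" and r: "0 < r" and x: "x \<in> frontier \<Omega>"
  obtains T b \<phi> where "lipschitz_graph_patch \<Omega> T b \<phi> L x r"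
proof -
  have "open \<Omega>"
    using \<Omega> unfolding lip_domain_class_def by blast
  obtain T :: "'a \<Rightarrow> 'a" and b :: 'a and \<phi> :: "'a \<Rightarrow> real"
    where T: "\<forall>y z. dist (T y) (T z) = dist y z" "surj T" "b \<in> Basis"
      "L-lipschitz_on {z. z \<bullet> b = 0} \<phi>"
    and graph: "\<Omega> \<inter> ball x r = {y \<in> ball x r. T y \<bullet> b < \<phi> (T y - (T y \<bullet> b) *\<^sub>R b)}"
    using \<Omega> x unfolding lip_domain_class_def by blast
  have "lipschitz_graph_patch \<Omega> T b \<phi> L x r"
    by unfold_locales (use \<open>open \<Omega>\<close> T x r graph in \<open>simp_all add: perp_proj_def\<close>)
  then show thesis by (rule that)
qed

lemma space_bdry_measure [simp]: "space (bdry_measure \<Omega>) = frontier \<Omega>"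
  unfolding bdry_measure_def by (simp add: space_restrict_space)

lemma in_sets_bdry_measure: "A \<in> sets borel \<Longrightarrow> A \<subseteq> frontier \<Omega> \<Longrightarrow> A \<in> sets (bdry_measure \<Omega>)"
  unfolding bdry_measure_def sets_restrict_space by auto

lemma emeasure_bdry_measure:
  fixes \<Omega> :: "'a::euclidean_space set"
  assumes "A \<subseteq> frontier \<Omega>"
  shows "emeasure (bdry_measure \<Omega>) A = emeasure (hausdorff_measure (real DIM('a) - 1)) A"
  unfolding bdry_measure_def using assms
  by (intro emeasure_restrict_space) (auto intro: borel_closed)

lemma borel_if_openin_frontier:
  "openin (top_of_set (frontier \<Omega>)) A \<Longrightarrow> A \<in> sets borel"
  unfolding openin_open by (auto intro: borel_closed)

lemma finite_measure_bdry_measure: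
  fixes \<Omega> :: "'a::euclidean_space set"
  assumes N2: "2 \<le> DIM('a)" and r: "0 < r" and \<Omega>: "lip_domain_class r L R \<Omega>"
  shows "finite_measure (bdry_measure \<Omega>)"
proof (rule finite_measureI)
  let ?H = "hausdorff_measure (real DIM('a) - 1) :: 'a measure"
  have "compact (frontier \<Omega>)"
    using \<Omega> unfolding lip_domain_class_def by (intro compact_frontier_bounded) (auto intro: bounded_subset)
  moreover have "frontier \<Omega> \<subseteq> (\<Union>x\<in>frontier \<Omega>. ball x r)"
    using r by auto
  ultimately obtain X where X: "X \<subseteq> frontier \<Omega>" "finite X" "frontier \<Omega> \<subseteq> (\<Union>x\<in>X. ball x r)"
    using compactE_image[of "frontier \<Omega>" "frontier \<Omega>" "\<lambda>x. ball x r"] by blast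
  have pieces: "frontier \<Omega> \<inter> ball x r \<in> sets ?H" for x
    by (auto intro: borel_closed)
  have patch: "emeasure ?H (frontier \<Omega> \<inter> ball x r) < \<infinity>" if x: "x \<in> X" for x
  proof -
    obtain T b \<phi> where "lipschitz_graph_patch \<Omega> T b \<phi> L x r"
      using lip_domain_class_patch[OF \<Omega> r, of x] X(1) x by blast
    then have "hausdorff_outer (real DIM('a) - 1) (frontier \<Omega> \<inter> ball x r) < \<infinity>"
      using N2 by (rule lipschitz_graph_patch.hausdorff_outer_frontier_lt_top)
    moreover have "emeasure ?H (frontier \<Omega> \<inter> ball x r)
        \<le> hausdorff_outer (real DIM('a) - 1) (frontier \<Omega> \<inter> ball x r)"
      using pieces[of x] by (intro emeasure_hausdorff_measure_le) simp
    ultimately show ?thesis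
      by (rule le_less_trans[rotated])
  qed
  have "emeasure (bdry_measure \<Omega>) (space (bdry_measure \<Omega>)) = emeasure ?H (frontier \<Omega>)"
    by (simp add: emeasure_bdry_measure)
  also have "\<dots> \<le> emeasure ?H (\<Union>x\<in>X. frontier \<Omega> \<inter> ball x r)"
    using X(3) by (intro emeasure_mono sets.finite_UN[OF X(2)] pieces) auto
  also have "\<dots> \<le> (\<Sum>x\<in>X. emeasure ?H (frontier \<Omega> \<inter> ball x r))"
    using X(2) pieces by (intro emeasure_subadditive_finite) auto
  also have "\<dots> < \<infinity>"
    using X(2) patch by (simp add: sum_Pinfty less_top)
  finally show "emeasure (bdry_measure \<Omega>) (space (bdry_measure \<Omega>)) \<noteq> \<infinity>"
    by simp
qed

lemma measure_bdry_measure_pos: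
  fixes \<Omega> :: "'a::euclidean_space set"
  assumes N2: "2 \<le> DIM('a)" and r: "0 < r" and \<Omega>: "lip_domain_class r L R \<Omega>"
    and outer: "\<forall>A\<in>sets borel. emeasure (hausdorff_measure (real DIM('a) - 1)) A
      = hausdorff_outer (real DIM('a) - 1) (A :: 'a set)"
    and A: "openin (top_of_set (frontier \<Omega>)) A" "A \<noteq> {}"
  shows "0 < measure (bdry_measure \<Omega>) A"
proof -
  obtain x where x: "x \<in> A"
    using A(2) by blast
  obtain U where U: "open U" "A = frontier \<Omega> \<inter> U"
    using A(1) unfolding openin_open by blast
  obtain \<epsilon> where \<epsilon>: "0 < \<epsilon>" "ball x \<epsilon> \<subseteq> U"
    using U x open_contains_ball by blast
  have "x \<in> frontier \<Omega>"
    using U x by blast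
  then obtain T b \<phi> where "lipschitz_graph_patch \<Omega> T b \<phi> L x r"
    using lip_domain_class_patch[OF \<Omega> r] by blast
  then have "0 < hausdorff_outer (real DIM('a) - 1) (frontier \<Omega> \<inter> ball x (min \<epsilon> r))"
    using N2 \<epsilon> r by (intro lipschitz_graph_patch.hausdorff_outer_frontier_pos) auto
  also have "\<dots> \<le> hausdorff_outer (real DIM('a) - 1) A"
    using \<epsilon> U by (intro hausdorff_outer_mono) auto
  also have "\<dots> = emeasure (bdry_measure \<Omega>) A"
    using outer borel_if_openin_frontier[OF A(1)] U by (simp add: emeasure_bdry_measure)
  finally show ?thesis
    using finite_measure.emeasure_finite[OF finite_measure_bdry_measure[OF N2 r \<Omega>], of A]
    by (simp add: measure_def enn2real_positive_iff less_top)
qed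

lemma electrode_system_bdry_measure:
  fixes \<Omega> :: "'a::euclidean_space set"
  assumes N2: "2 \<le> DIM('a)" and r: "0 < r" and \<Omega>: "lip_domain_class r L R \<Omega>"
    and outer: "\<forall>A\<in>sets borel. emeasure (hausdorff_measure (real DIM('a) - 1)) A
      = hausdorff_outer (real DIM('a) - 1) (A :: 'a set)"
    and e: "electrodes \<Omega> e" and et: "extended_electrodes \<Omega> e et"
  shows "electrode_system (bdry_measure \<Omega>) e et"
proof -
  have e_open: "openin (top_of_set (frontier \<Omega>)) (e m)" "e m \<noteq> {}" for m
    using e unfolding electrodes_def by auto
  have et_open: "openin (top_of_set (frontier \<Omega>)) (et m)" for m
    using et unfolding extended_electrodes_def by auto
  have sets: "A \<in> sets (bdry_measure \<Omega>)" if "openin (top_of_set (frontier \<Omega>)) A" for A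
    using in_sets_bdry_measure[OF borel_if_openin_frontier[OF that] openin_imp_subset[OF that]] .
  show ?thesis
  proof (intro electrode_system.intro electrode_system_axioms.intro)
    show "finite_measure (bdry_measure \<Omega>)"
      using N2 r \<Omega> by (rule finite_measure_bdry_measure)
    show "e m \<in> sets (bdry_measure \<Omega>)" "et m \<in> sets (bdry_measure \<Omega>)" for m
      using sets e_open et_open by blast+
    show "e m \<inter> e m' = {}" "et m \<inter> et m' = {}" if "m \<noteq> m'" for m m'
      using e et that unfolding electrodes_def extended_electrodes_def by blast+
    show "0 < measure (bdry_measure \<Omega>) (e m)" for m
      using measure_bdry_measure_pos[OF N2 r \<Omega> outer e_open] .
    let ?N = "frontier \<Omega> - (\<Union>m. et m)"
    have "?N \<in> sets borel"
      using borel_if_openin_frontier[OF et_open] by (intro sets.Diff sets.finite_UN) (auto intro: borel_closed)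
    moreover have "emeasure (hausdorff_measure (real DIM('a) - 1)) ?N = 0"
      using et unfolding extended_electrodes_def by blast
    ultimately have "?N \<in> null_sets (bdry_measure \<Omega>)"
      by (auto intro!: null_setsI in_sets_bdry_measure simp: emeasure_bdry_measure)
    then show "AE x in bdry_measure \<Omega>. x \<in> (\<Union>m. et m)"
      by (rule AE_I') auto
  qed
qed

lemma L2star_if_H12star: "H12star \<Omega> \<phi> \<Longrightarrow> L2star (bdry_measure \<Omega>) \<phi>"
  unfolding H12star_def trace_of_def L2star_def by blast

theorem lemma3p2:
  fixes \<Omega> :: "'a::euclidean_space set"
    and r L R :: real
    and e et :: "'m::finite \<Rightarrow> 'a set"
  assumes "DIM('a) \<ge> 2"
    and "0 < r"
    and "lip_domain_class r L R \<Omega>"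
    and "electrodes \<Omega> e"
    and "extended_electrodes \<Omega> e et"
  shows "(\<forall>f g. L2star (bdry_measure \<Omega>) f \<longrightarrow> L2star (bdry_measure \<Omega>) g \<longrightarrow>
            integral\<^sup>L (bdry_measure \<Omega>)
              (\<lambda>x. E_op (bdry_measure \<Omega>) e et (P_op (bdry_measure \<Omega>) e f) x * g x)
          = integral\<^sup>L (bdry_measure \<Omega>) (\<lambda>x. f x * Qop (bdry_measure \<Omega>) e et g x))
    \<and> (SUP \<phi>\<in>{\<phi>. H12star \<Omega> \<phi> \<and> H12norm \<Omega> \<phi> \<le> 1}.
          ereal (L2norm (bdry_measure \<Omega>)
            (\<lambda>x. \<phi> x - E_op (bdry_measure \<Omega>) e et (P_op (bdry_measure \<Omega>) e \<phi>) x)))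
      = (SUP g\<in>{g. L2star (bdry_measure \<Omega>) g \<and> L2norm (bdry_measure \<Omega>) g \<le> 1}.
          Hm12norm \<Omega> (\<lambda>x. g x - Qop (bdry_measure \<Omega>) e et g x))"
proof -
  have "electrode_system (bdry_measure \<Omega>) e et
      \<or> emeasure (bdry_measure \<Omega>) (space (bdry_measure \<Omega>)) = 0"
    using emeasure_hausdorff_measure_cases[of "real DIM('a) - 1", where 'a = 'a]
  proof
    assume "\<forall>A::'a set. emeasure (hausdorff_measure (real DIM('a) - 1)) A = 0"
    then show ?thesis
      by (simp add: emeasure_bdry_measure)
  next
    assume "\<forall>A::'a set\<in>sets borel. emeasure (hausdorff_measure (real DIM('a) - 1)) A
      = hausdorff_outer (real DIM('a) - 1) A"
    then show ?thesis
      using electrode_system_bdry_measure assms by blast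
  qed
  moreover have "\<phi> \<in> {\<phi>. H12star \<Omega> \<phi> \<and> H12norm \<Omega> \<phi> \<le> 1} \<Longrightarrow> L2star (bdry_measure \<Omega>) \<phi>" for \<phi>
    by (simp add: L2star_if_H12star)
  ultimately show ?thesis
    unfolding Hm12norm_def by (rule E_op_P_op_adjoint_and_norm_identity)
qed

end
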